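(* Let $n\ge1$, $a_1,\dots,a_n,b\in\mathbb{Z}$, $m\in\mathbb{Z}$, $m\ne0$, and suppose the congruence $$a_1x_1+\dots+a_nx_n\equiv b\pmod m \qquad (1)$$ has at least one solution. Let $P_1=(a_1,\dots,a_n,m)\cdot|m|^{n-1}$ and $P_2=(a_1,m)\cdots(a_n,m)$. Then (1) has a base, and every base of (1) consists of exactly $P_1/P_2$ solutions (in particular $P_1/P_2$ is a positive integer, and all bases of (1) have the same number of elements).
   Context: $(c_1,\dots,c_k)$ denotes the positive greatest common divisor. A solution of (1) is a vector in $\mathbb{Z}^n$ satisfying (1); two solutions $X,Y$ are distinct if $X_i\not\equiv Y_i\pmod m$ for some $i$. For $i=1,\dots,n$ let $V_i\in\mathbb{Z}^n$ be the vector whose $i$-th coordinate is $\frac{m}{(a_i,m)}$ and whose other coordinates are $0$, and let $A\subseteq\mathbb{Z}^n$ be the $\mathbb{Z}$-module generated by $V_1,\dots,V_n$. Two solutions $X,Y$ of (1) are called independent if $X-Y\notin A$, and dependent otherwise. Solutions $X^1,\dots,X^s$ of (1) form a base of (1) if they are pairwise independent and every solution of (1) is congruent modulo $m$ (coordinatewise) to a vector of the form $X^j+\sum_{i=1}^n t_iV_i$ for some $j\in\{1,\dots,s\}$ and integers $t_i$ with $0\le t_i<(a_i,m)$. *)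

theory Defs
  imports "HOL-Number_Theory.Number_Theory"
begin

text \<open>Vectors of Z^n are represented as functions nat \<Rightarrow> int that vanish
  outside the index set {0..<n} (coordinate i of the paper is index i-1 here).\<close>

definition Zn :: "nat \<Rightarrow> (nat \<Rightarrow> int) set" where
  "Zn n = {x. \<forall>i\<ge>n. x i = 0}"

definition is_solution :: "nat \<Rightarrow> (nat \<Rightarrow> int) \<Rightarrow> int \<Rightarrow> int \<Rightarrow> (nat \<Rightarrow> int) \<Rightarrow> bool" where
  "is_solution n a b m X \<longleftrightarrow> X \<in> Zn n \<and> [(\<Sum>i<n. a i * X i) = b] (mod m)"

definition Vvec :: "(nat \<Rightarrow> int) \<Rightarrow> int \<Rightarrow> nat \<Rightarrow> (nat \<Rightarrow> int)" where
  "Vvec a m k = (\<lambda>i. if i = k then m div gcd (a k) m else 0)"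

definition Amod :: "nat \<Rightarrow> (nat \<Rightarrow> int) \<Rightarrow> int \<Rightarrow> (nat \<Rightarrow> int) set" where
  "Amod n a m = {v. \<exists>t :: nat \<Rightarrow> int. v = (\<lambda>i. \<Sum>k<n. t k * Vvec a m k i)}"

definition independent :: "nat \<Rightarrow> (nat \<Rightarrow> int) \<Rightarrow> int \<Rightarrow> (nat \<Rightarrow> int) \<Rightarrow> (nat \<Rightarrow> int) \<Rightarrow> bool" where
  "independent n a m X Y \<longleftrightarrow> (\<lambda>i. X i - Y i) \<notin> Amod n a m"

definition is_base :: "nat \<Rightarrow> (nat \<Rightarrow> int) \<Rightarrow> int \<Rightarrow> int \<Rightarrow> (nat \<Rightarrow> int) list \<Rightarrow> bool" where
  "is_base n a b m Xs \<longleftrightarrow>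
     (\<forall>j<length Xs. is_solution n a b m (Xs ! j)) \<and>
     (\<forall>j<length Xs. \<forall>k<length Xs. j \<noteq> k \<longrightarrow> independent n a m (Xs ! j) (Xs ! k)) \<and>
     (\<forall>Y. is_solution n a b m Y \<longrightarrow>
        (\<exists>j<length Xs. \<exists>t :: nat \<Rightarrow> int.
           (\<forall>i<n. 0 \<le> t i \<and> t i < gcd (a i) m) \<and>
           (\<forall>i<n. [Y i = (Xs ! j) i + (\<Sum>k<n. t k * Vvec a m k i)] (mod m))))"

end

theory Submission
  imports Defs
begin

text \<open>
  Reduce every coordinate of a solution modulo \<open>\<bar>m/(a\<^sub>i,m)\<bar>\<close>. Two vectors are dependent
  exactly when their reductions agree, and the reduction of a solution is again a solution.
  Hence the bases are exactly the lists of solutions whose reductions enumerate, without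
  repetition, the solutions lying in the box \<open>\<Prod>\<^sub>i [0, \<bar>m/(a\<^sub>i,m)\<bar>)\<close>: bases exist and
  all have the cardinality of this set of reduced solutions.

  That cardinality is computed by induction on the number of variables. Fixing the last
  coordinate \<open>v\<close> leaves a congruence in one variable less with right-hand side \<open>c - a\<^sub>k v\<close>,
  solvable iff \<open>d = (a\<^sub>0, \<dots>, a\<^sub>k\<^sub>-\<^sub>1, m)\<close> divides \<open>c - a\<^sub>k v\<close>. The admissible \<open>v\<close> in
  \<open>[0, \<bar>m/(a\<^sub>k,m)\<bar>)\<close> form a single residue class modulo \<open>d/(a\<^sub>k,d)\<close> (or none, if
  \<open>(a\<^sub>k,d)\<close> does not divide \<open>c\<close>), and this modulus divides the length of the range.
\<close>

lemma card_residue_class_atLeastLessThan: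
  fixes q s r :: int
  assumes "q > 0" and "s \<ge> 0"
  shows "card {v\<in>{0..<q * s}. v mod q = r mod q} = nat s"
proof -
  have "{v\<in>{0..<q * s}. v mod q = r mod q} = (\<lambda>j. r mod q + q * j) ` {0..<s}"
  proof (intro equalityI subsetI)
    fix v assume v: "v \<in> {v\<in>{0..<q * s}. v mod q = r mod q}"
    then have v_eq: "v = r mod q + q * (v div q)"
      using mod_mult_div_eq[of v q] by simp
    have "v < q * s" using v by simp
    then have "q * (v div q) < q * s"
      using v_eq \<open>q > 0\<close> pos_mod_sign[of q r] by linarith
    then have "v div q \<in> {0..<s}"
      using v \<open>q > 0\<close> by (simp add: pos_imp_zdiv_nonneg_iff)
    moreover note v_eq
    ultimately show "v \<in> (\<lambda>j. r mod q + q * j) ` {0..<s}" by blast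
  next
    fix v assume "v \<in> (\<lambda>j. r mod q + q * j) ` {0..<s}"
    then obtain j where j: "0 \<le> j" "j < s" "v = r mod q + q * j" by auto
    have "q * j + q \<le> q * s"
      using mult_left_mono[of "j + 1" s q] j assms by (simp add: distrib_left)
    moreover have "r mod q < q" "0 \<le> r mod q" using assms by simp_all
    moreover have "0 \<le> q * j" using j assms by simp
    ultimately have "0 \<le> v" "v < q * s" using j(3) by linarith+
    then show "v \<in> {v\<in>{0..<q * s}. v mod q = r mod q}" using j(3) by simp
  qed
  moreover have "inj_on (\<lambda>j. r mod q + q * j) {0..<s}" using assms by (auto simp: inj_on_def)
  ultimately show ?thesis by (simp add: card_image)
qed

lemma card_linear_congruence_solutions:
  fixes a c d h :: int
  assumes d: "d > 0" and h: "h \<ge> 0" and period: "d dvd a * h"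
  shows "int (card {v\<in>{0..<h}. d dvd c - a * v}) * d = (if gcd a d dvd c then gcd a d * h else 0)"
proof (cases "gcd a d dvd c")
  case False
  have "\<not> d dvd c - a * v" for v
  proof
    assume "d dvd c - a * v"
    then have "gcd a d dvd (c - a * v) + a * v"
      by (meson dvd_add dvd_mult2 dvd_trans gcd_dvd1 gcd_dvd2)
    then show False using False by simp
  qed
  then show ?thesis using False by simp
next
  case True
  define e where "e = gcd a d"
  define q where "q = d div e"
  define a' where "a' = a div e"
  have e: "e > 0" using d by (simp add: e_def)
  have d_eq: "d = e * q" and a_eq: "a = e * a'" by (simp_all add: q_def a'_def e_def)
  have q: "q > 0" using d e d_eq by (simp add: zero_less_mult_iff)
  have coprime: "coprime a' q"
    unfolding a'_def q_def e_def using d by (intro div_gcd_coprime) auto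
  obtain c' where c: "c = e * c'" using True e_def by blast
  obtain u v0 where bezout: "u * a + v0 * d = e" using bezout_int[of a d] e_def by blast
  \<comment> \<open>\<open>u * c'\<close> is a particular solution, and the solutions form one class modulo \<open>q\<close>\<close>
  have solution_iff: "d dvd c - a * v \<longleftrightarrow> v mod q = (u * c') mod q" for v
  proof -
    have "c - a * v = a * (u * c' - v) + d * (v0 * c')"
      unfolding c bezout[symmetric] by (simp add: algebra_simps)
    then have "d dvd c - a * v \<longleftrightarrow> d dvd a * (u * c' - v)"
      by (simp add: dvd_add_left_iff)
    also have "\<dots> \<longleftrightarrow> q dvd a' * (u * c' - v)"
      using d_eq a_eq e by (simp add: mult.assoc)
    also have "\<dots> \<longleftrightarrow> q dvd u * c' - v"
      using coprime by (simp add: coprime_dvd_mult_right_iff coprime_commute)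
    finally show ?thesis by (simp add: mod_eq_dvd_iff dvd_diff_commute)
  qed
  have "q dvd a' * h" using period d_eq a_eq e by (simp add: mult.assoc)
  then have "q dvd h" using coprime by (simp add: coprime_dvd_mult_right_iff coprime_commute)
  then obtain s where s: "h = q * s" by blast
  have "s \<ge> 0" using h q s by (simp add: zero_le_mult_iff)
  have "card {v\<in>{0..<h}. d dvd c - a * v} = nat s"
    using card_residue_class_atLeastLessThan[OF q \<open>s \<ge> 0\<close>] by (simp add: s solution_iff)
  then have "int (card {v\<in>{0..<h}. d dvd c - a * v}) * d = s * (e * q)"
    using \<open>s \<ge> 0\<close> d_eq by simp
  also have "\<dots> = e * h" using s by (simp add: algebra_simps)
  finally show ?thesis using True by (simp add: e_def)
qed

definition reduced_solutions :: "nat \<Rightarrow> (nat \<Rightarrow> int) \<Rightarrow> int \<Rightarrow> int \<Rightarrow> (nat \<Rightarrow> int) set" where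
  "reduced_solutions n a b m =
     {X. is_solution n a b m X \<and> (\<forall>i<n. 0 \<le> X i \<and> X i < \<bar>m div gcd (a i) m\<bar>)}"

lemma mem_reduced_solutions:
  "X \<in> reduced_solutions n a b m \<longleftrightarrow>
     (\<forall>i\<ge>n. X i = 0) \<and> (\<forall>i<n. 0 \<le> X i \<and> X i < \<bar>m div gcd (a i) m\<bar>) \<and>
     m dvd (\<Sum>i<n. a i * X i) - b"
  by (auto simp: reduced_solutions_def is_solution_def Zn_def cong_iff_dvd_diff)

lemma bij_betw_reduced_solutions_Suc:
  "bij_betw (\<lambda>X. (X k, X(k := 0))) (reduced_solutions (Suc k) a c m)
     (SIGMA v:{0..<\<bar>m div gcd (a k) m\<bar>}. reduced_solutions k a (c - a k * v) m)"
proof (rule bij_betw_byWitness[where f' = "\<lambda>(v, X). X(k := v)"], goal_cases)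
  case 1
  show ?case by simp
next
  case 2
  show ?case
  proof
    fix p assume "p \<in> (SIGMA v:{0..<\<bar>m div gcd (a k) m\<bar>}. reduced_solutions k a (c - a k * v) m)"
    then obtain v X where p: "p = (v, X)" and "X \<in> reduced_solutions k a (c - a k * v) m"
      by blast
    then have "X k = 0" by (simp add: mem_reduced_solutions)
    then show "(\<lambda>X. (X k, X(k := 0))) ((\<lambda>(v, X). X(k := v)) p) = p" using p by auto
  qed
next
  case 3
  show ?case
  proof (rule image_subsetI)
    fix X assume X: "X \<in> reduced_solutions (Suc k) a c m"
    have "m dvd (\<Sum>i<k. a i * (X(k := 0)) i) - (c - a k * X k)"
      using X by (simp add: mem_reduced_solutions diff_diff_eq2)
    then show "(X k, X(k := 0))
        \<in> (SIGMA v:{0..<\<bar>m div gcd (a k) m\<bar>}. reduced_solutions k a (c - a k * v) m)"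
      using X by (auto simp: mem_reduced_solutions)
  qed
next
  case 4
  show ?case
  proof (rule image_subsetI)
    fix p assume "p \<in> (SIGMA v:{0..<\<bar>m div gcd (a k) m\<bar>}. reduced_solutions k a (c - a k * v) m)"
    then obtain v X where p: "p = (v, X)" and v: "v \<in> {0..<\<bar>m div gcd (a k) m\<bar>}"
      and X: "X \<in> reduced_solutions k a (c - a k * v) m"
      by blast
    have "(\<Sum>i<k. a i * (X(k := v)) i) = (\<Sum>i<k. a i * X i)" by (rule sum.cong) auto
    moreover have "\<forall>i<Suc k. 0 \<le> (X(k := v)) i \<and> (X(k := v)) i < \<bar>m div gcd (a i) m\<bar>"
      using v X by (simp add: mem_reduced_solutions less_Suc_eq)
    ultimately show "(\<lambda>(v, X). X(k := v)) p \<in> reduced_solutions (Suc k) a c m"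
      using X p by (simp add: mem_reduced_solutions diff_diff_eq2)
  qed
qed

lemma finite_reduced_solutions: "finite (reduced_solutions k a c m)"
proof (induction k arbitrary: c)
  case 0
  have "reduced_solutions 0 a c m \<subseteq> {\<lambda>_. 0}"
    by (auto simp: mem_reduced_solutions fun_eq_iff)
  then show ?case by (rule finite_subset) simp
next
  case (Suc k)
  then show ?case using bij_betw_finite[OF bij_betw_reduced_solutions_Suc] by auto
qed

lemma m_dvd_mult_div_gcd: "m dvd a * (m div gcd a m)" for a m :: int
  by (metis dvd_div_mult_self dvd_triv_right div_mult_swap gcd_dvd1 gcd_dvd2 mult.commute)

text \<open>The factor \<open>\<bar>m\<bar>\<close> on both sides makes the formula hold for \<open>k = 0\<close> as well.\<close>

lemma card_reduced_solutions:
  fixes m :: int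
  assumes "m \<noteq> 0"
  shows "int (card (reduced_solutions k a c m)) * (\<Prod>i<k. gcd (a i) m) * \<bar>m\<bar> =
     (if Gcd (insert m (a ` {..<k})) dvd c then Gcd (insert m (a ` {..<k})) * \<bar>m\<bar> ^ k else 0)"
proof (induction k arbitrary: c)
  case 0
  have "reduced_solutions 0 a c m = (if m dvd c then {\<lambda>_. 0} else {})"
    by (auto simp: mem_reduced_solutions fun_eq_iff)
  then show ?case by simp
next
  case (Suc k)
  define d where "d = Gcd (insert m (a ` {..<k}))"
  define g where "g = gcd (a k) m"
  define h where "h = \<bar>m div g\<bar>"
  have "d > 0" using assms by (simp add: d_def le_less)
  have "g > 0" using assms by (simp add: g_def)
  have "h * g = \<bar>m div g * g\<bar>" using \<open>g > 0\<close> by (simp add: h_def abs_mult)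
  then have hg: "h * g = \<bar>m\<bar>" by (simp add: g_def)
  have "d dvd m" by (simp add: d_def)
  moreover have "m dvd a k * h"
    using m_dvd_mult_div_gcd[of m "a k"] by (simp add: h_def g_def abs_if)
  ultimately have period: "d dvd a k * h" by (rule dvd_trans)
  have "card (reduced_solutions (Suc k) a c m) = (\<Sum>v\<in>{0..<h}. card (reduced_solutions k a (c - a k * v) m))"
    using bij_betw_same_card[OF bij_betw_reduced_solutions_Suc] by (simp add: finite_reduced_solutions h_def g_def)
  then have "int (card (reduced_solutions (Suc k) a c m)) * (\<Prod>i<k. gcd (a i) m) * \<bar>m\<bar> =
      (\<Sum>v\<in>{0..<h}. if d dvd c - a k * v then d * \<bar>m\<bar> ^ k else 0)"
    using Suc.IH[folded d_def] by (simp add: sum_distrib_right)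
  also have "\<dots> = int (card {v\<in>{0..<h}. d dvd c - a k * v}) * d * \<bar>m\<bar> ^ k"
    by (simp add: sum.inter_filter[symmetric])
  finally have "int (card (reduced_solutions (Suc k) a c m)) * (\<Prod>i<Suc k. gcd (a i) m) * \<bar>m\<bar> =
      int (card {v\<in>{0..<h}. d dvd c - a k * v}) * d * g * \<bar>m\<bar> ^ k"
    by (simp add: g_def algebra_simps)
  also have "\<dots> = (if gcd (a k) d dvd c then gcd (a k) d * h else 0) * g * \<bar>m\<bar> ^ k"
    using card_linear_congruence_solutions[OF \<open>d > 0\<close> _ period, of c] by (simp add: h_def)
  also have "\<dots> = (if gcd (a k) d dvd c then gcd (a k) d * \<bar>m\<bar> ^ Suc k else 0)"
    by (simp add: hg[symmetric] algebra_simps)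
  also have "gcd (a k) d = Gcd (insert m (a ` {..<Suc k}))"
    by (simp add: d_def lessThan_Suc gcd.left_commute)
  finally show ?case .
qed

definition reduce :: "nat \<Rightarrow> (nat \<Rightarrow> int) \<Rightarrow> int \<Rightarrow> (nat \<Rightarrow> int) \<Rightarrow> nat \<Rightarrow> int" where
  "reduce n a m X = (\<lambda>i. if i < n then X i mod \<bar>m div gcd (a i) m\<bar> else 0)"

lemma reduce_eq_iff:
  "reduce n a m X = reduce n a m Y \<longleftrightarrow> (\<forall>i<n. m div gcd (a i) m dvd X i - Y i)"
  by (auto simp: reduce_def fun_eq_iff mod_eq_dvd_iff)

lemma sum_Vvec:
  "(\<Sum>k<n. t k * Vvec a m k i) = (if i < n then t i * (m div gcd (a i) m) else 0)"
proof -
  have "(\<Sum>k<n. t k * Vvec a m k i) = (\<Sum>k<n. if k = i then t i * (m div gcd (a i) m) else 0)"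
    by (rule sum.cong) (auto simp: Vvec_def)
  then show ?thesis by simp
qed

lemma Amod_iff: "v \<in> Amod n a m \<longleftrightarrow> v \<in> Zn n \<and> (\<forall>i<n. m div gcd (a i) m dvd v i)"
proof
  assume "v \<in> Amod n a m"
  then obtain t where "v = (\<lambda>i. \<Sum>k<n. t k * Vvec a m k i)" by (auto simp: Amod_def)
  then show "v \<in> Zn n \<and> (\<forall>i<n. m div gcd (a i) m dvd v i)"
    by (simp add: sum_Vvec Zn_def)
next
  assume v: "v \<in> Zn n \<and> (\<forall>i<n. m div gcd (a i) m dvd v i)"
  define t where "t i = v i div (m div gcd (a i) m)" for i
  have "v = (\<lambda>i. \<Sum>k<n. t k * Vvec a m k i)"
    using v by (auto simp: sum_Vvec t_def Zn_def fun_eq_iff)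
  then show "v \<in> Amod n a m" by (auto simp: Amod_def)
qed

lemma independent_iff_reduce_neq:
  assumes "X \<in> Zn n" and "Y \<in> Zn n"
  shows "independent n a m X Y \<longleftrightarrow> reduce n a m X \<noteq> reduce n a m Y"
  using assms by (simp add: independent_def Amod_iff reduce_eq_iff Zn_def)

lemma ex_translate_cong_iff_dvd:
  assumes "m \<noteq> 0"
  shows "(\<exists>t. (\<forall>i<n. 0 \<le> t i \<and> t i < gcd (a i) m) \<and>
            (\<forall>i<n. [Y i = X i + (\<Sum>k<n. t k * Vvec a m k i)] (mod m)))
    \<longleftrightarrow> (\<forall>i<n. m div gcd (a i) m dvd Y i - X i)"
proof
  assume "\<exists>t. (\<forall>i<n. 0 \<le> t i \<and> t i < gcd (a i) m) \<and>
            (\<forall>i<n. [Y i = X i + (\<Sum>k<n. t k * Vvec a m k i)] (mod m))"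
  then obtain t where t: "\<forall>i<n. m dvd Y i - X i - t i * (m div gcd (a i) m)"
    by (auto simp: sum_Vvec cong_iff_dvd_diff diff_diff_eq)
  show "\<forall>i<n. m div gcd (a i) m dvd Y i - X i"
  proof (intro allI impI)
    fix i assume "i < n"
    have "m div gcd (a i) m dvd m" by (metis dvd_div_mult_self dvd_triv_left gcd_dvd2)
    then have "m div gcd (a i) m dvd Y i - X i - t i * (m div gcd (a i) m)"
      using t \<open>i < n\<close> dvd_trans by blast
    then show "m div gcd (a i) m dvd Y i - X i" by (metis diff_add_cancel dvd_add dvd_triv_right)
  qed
next
  assume dvd: "\<forall>i<n. m div gcd (a i) m dvd Y i - X i"
  define t where "t i = (Y i - X i) div (m div gcd (a i) m) mod gcd (a i) m" for i
  have "[Y i = X i + t i * (m div gcd (a i) m)] (mod m)" if "i < n" for i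
  proof -
    define w g q where "w = m div gcd (a i) m" and "g = gcd (a i) m" and "q = (Y i - X i) div w"
    have "Y i - X i = q * w" using dvd \<open>i < n\<close> by (simp add: q_def w_def)
    moreover have "t i = q mod g" by (simp add: t_def q_def w_def g_def)
    ultimately have "Y i - (X i + t i * w) = (q - q mod g) * w" by (simp add: algebra_simps)
    also have "\<dots> = (q div g) * (g * w)" by (simp add: minus_mod_eq_mult_div)
    also have "g * w = m" by (simp add: g_def w_def)
    finally show ?thesis by (simp add: cong_iff_dvd_diff w_def)
  qed
  moreover have "0 \<le> t i \<and> t i < gcd (a i) m" for i
    using assms by (simp add: t_def)
  ultimately show "\<exists>t. (\<forall>i<n. 0 \<le> t i \<and> t i < gcd (a i) m) \<and>
            (\<forall>i<n. [Y i = X i + (\<Sum>k<n. t k * Vvec a m k i)] (mod m))"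
    by (auto simp: sum_Vvec)
qed

lemma is_base_iff:
  assumes "m \<noteq> 0"
  shows "is_base n a b m Xs \<longleftrightarrow>
    (\<forall>X\<in>set Xs. is_solution n a b m X) \<and> distinct (map (reduce n a m) Xs) \<and>
    (\<forall>Y. is_solution n a b m Y \<longrightarrow> reduce n a m Y \<in> reduce n a m ` set Xs)"
  unfolding is_base_def
proof (rule conj_cong, goal_cases)
  case 1
  show ?case by (simp add: all_set_conv_all_nth)
next
  case 2
  then have Zn: "Xs ! j \<in> Zn n" if "j < length Xs" for j
    using that by (simp add: is_solution_def all_set_conv_all_nth)
  have "(\<forall>j<length Xs. \<forall>k<length Xs. j \<noteq> k \<longrightarrow> independent n a m (Xs ! j) (Xs ! k))
      \<longleftrightarrow> distinct (map (reduce n a m) Xs)"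
    by (simp add: distinct_conv_nth independent_iff_reduce_neq Zn)
  moreover have "(\<exists>j<length Xs. \<exists>t. (\<forall>i<n. 0 \<le> t i \<and> t i < gcd (a i) m) \<and>
        (\<forall>i<n. [Y i = (Xs ! j) i + (\<Sum>k<n. t k * Vvec a m k i)] (mod m)))
      \<longleftrightarrow> reduce n a m Y \<in> reduce n a m ` set Xs" for Y
  proof -
    have "(\<exists>j<length Xs. \<exists>t. (\<forall>i<n. 0 \<le> t i \<and> t i < gcd (a i) m) \<and>
        (\<forall>i<n. [Y i = (Xs ! j) i + (\<Sum>k<n. t k * Vvec a m k i)] (mod m)))
      \<longleftrightarrow> (\<exists>j<length Xs. reduce n a m Y = reduce n a m (Xs ! j))"
      by (simp add: ex_translate_cong_iff_dvd[OF assms] reduce_eq_iff)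
    also have "\<dots> \<longleftrightarrow> reduce n a m Y \<in> reduce n a m ` set Xs"
      by (auto simp: in_set_conv_nth image_iff) (metis nth_mem)
    finally show ?thesis .
  qed
  ultimately show ?case by (intro conj_cong) simp_all
qed

lemma reduce_solution:
  assumes "m \<noteq> 0" and "is_solution n a b m X"
  shows "reduce n a m X \<in> reduced_solutions n a b m"
proof -
  have "m dvd a i * (X i - reduce n a m X i)" if "i < n" for i
  proof -
    have "X i - reduce n a m X i = \<bar>m div gcd (a i) m\<bar> * (X i div \<bar>m div gcd (a i) m\<bar>)"
      using that by (simp add: reduce_def minus_mod_eq_mult_div)
    moreover have "m dvd a i * \<bar>m div gcd (a i) m\<bar>"
      using m_dvd_mult_div_gcd[of m "a i"] by (simp add: abs_if)
    ultimately show ?thesis by (simp add: mult.assoc[symmetric])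
  qed
  then have "m dvd (\<Sum>i<n. a i * (X i - reduce n a m X i))"
    by (intro dvd_sum) simp
  also have "\<dots> = ((\<Sum>i<n. a i * X i) - b) - ((\<Sum>i<n. a i * reduce n a m X i) - b)"
    by (simp add: sum_subtractf right_diff_distrib)
  finally have "m dvd ((\<Sum>i<n. a i * X i) - b) - ((\<Sum>i<n. a i * reduce n a m X i) - b)" .
  moreover have "m dvd (\<Sum>i<n. a i * X i) - b"
    using assms(2) by (simp add: is_solution_def cong_iff_dvd_diff)
  ultimately have "m dvd (\<Sum>i<n. a i * reduce n a m X i) - b"
    using dvd_diff_right_iff by blast
  moreover have "m div gcd (a i) m \<noteq> 0" for i
    using assms(1) by (simp add: dvd_div_eq_0_iff)
  ultimately show ?thesis
    by (simp add: mem_reduced_solutions reduce_def)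
qed

lemma reduce_reduced_solution:
  assumes "X \<in> reduced_solutions n a b m"
  shows "reduce n a m X = X"
  using assms by (auto simp: mem_reduced_solutions reduce_def fun_eq_iff)

lemma reduce_image_solutions:
  assumes "m \<noteq> 0"
  shows "reduce n a m ` {X. is_solution n a b m X} = reduced_solutions n a b m"
proof
  show "reduce n a m ` {X. is_solution n a b m X} \<subseteq> reduced_solutions n a b m"
    using reduce_solution[OF assms] by blast
  show "reduced_solutions n a b m \<subseteq> reduce n a m ` {X. is_solution n a b m X}"
  proof
    fix X assume "X \<in> reduced_solutions n a b m"
    then show "X \<in> reduce n a m ` {X. is_solution n a b m X}"
      using reduce_reduced_solution by (force simp: reduced_solutions_def)
  qed
qed

lemma is_base_length:
  assumes "m \<noteq> 0" and "is_base n a b m Xs"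
  shows "length Xs = card (reduced_solutions n a b m)"
proof -
  have sols: "\<forall>X\<in>set Xs. is_solution n a b m X"
    and distinct: "distinct (map (reduce n a m) Xs)"
    and cover: "\<forall>Y. is_solution n a b m Y \<longrightarrow> reduce n a m Y \<in> reduce n a m ` set Xs"
    using assms by (simp_all add: is_base_iff)
  have "reduce n a m ` set Xs \<subseteq> reduced_solutions n a b m"
    using sols reduce_solution[OF assms(1)] by blast
  moreover have "reduced_solutions n a b m \<subseteq> reduce n a m ` set Xs"
    unfolding reduce_image_solutions[OF assms(1), symmetric] using cover by blast
  ultimately have "set (map (reduce n a m) Xs) = reduced_solutions n a b m"
    by simp
  then show ?thesis
    using distinct_card[OF distinct] by simp
qed

lemma ex_is_base:
  assumes "m \<noteq> 0"
  shows "\<exists>Xs. is_base n a b m Xs"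
proof -
  obtain Xs where Xs: "set Xs = reduced_solutions n a b m" and "distinct Xs"
    using finite_distinct_list[OF finite_reduced_solutions] by blast
  have "map (reduce n a m) Xs = Xs"
    by (rule map_idI) (use Xs reduce_reduced_solution in blast)
  then have "reduce n a m ` set Xs = reduced_solutions n a b m"
    using Xs by (metis set_map)
  then have "is_base n a b m Xs"
    using Xs \<open>distinct Xs\<close> \<open>map (reduce n a m) Xs = Xs\<close> reduce_solution[OF assms]
    by (simp add: is_base_iff[OF assms] reduced_solutions_def)
  then show ?thesis ..
qed

lemma Gcd_coeffs_dvd_rhs:
  assumes "is_solution n a b m X"
  shows "Gcd (insert m (a ` {..<n})) dvd b"
proof -
  let ?d = "Gcd (insert m (a ` {..<n}))"
  have "?d dvd (\<Sum>i<n. a i * X i)"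
    by (intro dvd_sum dvd_mult2 Gcd_dvd) simp
  moreover have "?d dvd (\<Sum>i<n. a i * X i) - b"
    using assms dvd_trans[of ?d m] by (simp add: is_solution_def cong_iff_dvd_diff)
  ultimately show ?thesis
    using dvd_diff_right_iff by blast
qed

theorem theorem4:
  fixes n :: nat and a :: "nat \<Rightarrow> int" and b m :: int
  assumes "n \<ge> 1" and "m \<noteq> 0"
    and "\<exists>X. is_solution n a b m X"
  defines "P1 \<equiv> Gcd (insert m (a ` {..<n})) * \<bar>m\<bar> ^ (n - 1)"
    and "P2 \<equiv> (\<Prod>i<n. gcd (a i) m)"
  shows "P2 dvd P1 \<and> P1 div P2 > 0 \<and> (\<exists>Xs. is_base n a b m Xs) \<and>
         (\<forall>Xs. is_base n a b m Xs \<longrightarrow> int (length Xs) = P1 div P2)"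
proof -
  obtain X where X: "is_solution n a b m X" using assms(3) ..
  define N where "N = card (reduced_solutions n a b m)"
  have "int N * P2 * \<bar>m\<bar> = P1 * \<bar>m\<bar>"
    using card_reduced_solutions[OF assms(2), of n a b] Gcd_coeffs_dvd_rhs[OF X] assms(1)
    by (simp add: N_def P1_def P2_def power_eq_if)
  then have N: "int N * P2 = P1" using assms(2) by simp
  have "P2 > 0" using assms(2) by (simp add: P2_def prod_pos)
  have "N > 0"
    using reduce_solution[OF assms(2) X] finite_reduced_solutions by (auto simp: N_def card_gt_0_iff)
  show ?thesis
    using N \<open>P2 > 0\<close> \<open>N > 0\<close> ex_is_base[OF assms(2)] is_base_length[OF assms(2)]
    by (auto simp: N_def)
qed

end
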